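(* Let $n\ge1$. (a) If $\alpha$ is an honourable subset of $\coprod_{k=0}^n\mathrm{Sur}([n],[k])$, then $\sum_{k=0}^n k|\alpha_k|\ge n$. (b) Conversely, let $(a_0,\dots,a_n)\in\mathbb{N}_0^{n+1}$ with $a_k\le\binom nk$ for all $k$. If $\sum_{k=0}^n k a_k\ge n$, then there is an honourable subset $\alpha$ of $\coprod_{k=0}^n\mathrm{Sur}([n],[k])$ with $|\alpha_k|=a_k$ for every $k\in\{0,\dots,n\}$.
   Context: $[n]=\{0<\dots<n\}$; $\mathrm{Sur}([n],[k])$ is the set of surjective order-preserving maps $[n]\to[k]$. For $\mu\in\mathrm{Sur}([n],[k])$ let $\mu^\triangle:=\{\max\mu^{-1}(0),\dots,\max\mu^{-1}(k-1)\}\subseteq\{0,\dots,n-1\}$ (a set of cardinality $k$; $\mu\mapsto\mu^\triangle$ is a bijection from $\coprod_{k}\mathrm{Sur}([n],[k])$ onto the power set of $\{0,\dots,n-1\}$). A subset $\alpha\subseteq\coprod_{k=0}^n\mathrm{Sur}([n],[k])$ is honourable if $\bigcup_{\mu\in\alpha}\mu^\triangle=\{0,1,\dots,n-1\}$; $\alpha_k:=\alpha\cap\mathrm{Sur}([n],[k])$. *)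

theory Defs
  imports "HOL-Library.FuncSet"
begin

definition Sur :: "nat \<Rightarrow> nat \<Rightarrow> (nat \<Rightarrow> nat) set" where
  "Sur n k = {\<mu> \<in> {0..n} \<rightarrow>\<^sub>E {0..k}. mono_on {0..n} \<mu> \<and> \<mu> ` {0..n} = {0..k}}"

definition SurAll :: "nat \<Rightarrow> (nat \<times> (nat \<Rightarrow> nat)) set" where
  "SurAll n = (SIGMA k:{0..n}. Sur n k)"

definition tri :: "nat \<Rightarrow> nat \<Rightarrow> (nat \<Rightarrow> nat) \<Rightarrow> nat set" where
  "tri n k \<mu> = (\<lambda>j. Max {i \<in> {0..n}. \<mu> i = j}) ` {0..<k}"

definition honourable :: "nat \<Rightarrow> (nat \<times> (nat \<Rightarrow> nat)) set \<Rightarrow> bool" where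
  "honourable n \<alpha> \<longleftrightarrow> (\<Union>(k, \<mu>)\<in>\<alpha>. tri n k \<mu>) = {0..<n}"

definition layer :: "(nat \<times> (nat \<Rightarrow> nat)) set \<Rightarrow> nat \<Rightarrow> (nat \<Rightarrow> nat) set" where
  "layer \<alpha> k = {\<mu>. (k, \<mu>) \<in> \<alpha>}"

end

theory Submission
  imports Defs
begin

(* Via mu \<mapsto> mu^triangle, elements of Sur([n],[k]) correspond to k-subsets
   of {0..<n}: for S \<subseteq> {0..<n} the map i \<mapsto> |{s \<in> S. s < i}| is a surjection onto
   [card S] whose set of fibre maxima is exactly S.
   (a) Each mu \<in> Sur([n],[k]) contributes at most k points to the union defining
       honourability, so n \<le> \<Sum>_{(k,mu)\<in>alpha} k = \<Sum>_k k |alpha_k|.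
   (b) Cut {0..<n} into consecutive blocks U_k of length at most k a_k (prefix sums
       of k a_k).  Each U_k is covered by a_k distinct k-subsets of {0..<n} (greedy
       covering, using a_k \<le> n choose k), and the surjections attached to all these
       subsets form the required honourable alpha. *)

definition rank :: "nat set \<Rightarrow> nat \<Rightarrow> nat" where
  "rank S i = card {s\<in>S. s < i}"

definition surj_of :: "nat \<Rightarrow> nat set \<Rightarrow> nat \<Rightarrow> nat" where
  "surj_of n S = (\<lambda>i\<in>{0..n}. rank S i)"

lemma rank_mono: "finite S \<Longrightarrow> i \<le> j \<Longrightarrow> rank S i \<le> rank S j"
  unfolding rank_def by (rule card_mono) auto

lemma rank_le_card: "finite S \<Longrightarrow> rank S i \<le> card S"
  unfolding rank_def by (rule card_mono) auto

lemma rank_Suc_member: "finite S \<Longrightarrow> s \<in> S \<Longrightarrow> rank S (Suc s) = Suc (rank S s)"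
proof -
  assume "finite S" "s \<in> S"
  moreover have "{x\<in>S. x < Suc s} = insert s {x\<in>S. x < s}" using \<open>s \<in> S\<close> by auto
  ultimately show ?thesis unfolding rank_def by simp
qed

lemma rank_inj_on: "finite S \<Longrightarrow> inj_on (rank S) S"
proof (rule inj_onI)
  fix x y assume f: "finite S" and x: "x \<in> S" and y: "y \<in> S" and eq: "rank S x = rank S y"
  have "\<not> x < y" using rank_mono[OF f, of "Suc x" y] rank_Suc_member[OF f x] eq by auto
  moreover have "\<not> y < x" using rank_mono[OF f, of "Suc y" x] rank_Suc_member[OF f y] eq by auto
  ultimately show "x = y" by simp
qed

lemma rank_image: "finite S \<Longrightarrow> rank S ` S = {0..<card S}"
proof -
  assume f: "finite S"
  have sub: "rank S ` S \<subseteq> {0..<card S}"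
    unfolding rank_def by (auto intro!: psubset_card_mono f)
  have "card (rank S ` S) = card {0..<card S}"
    using card_image[OF rank_inj_on[OF f]] by simp
  with sub show ?thesis using card_subset_eq by (metis finite_atLeastLessThan)
qed

lemma surj_of_in_Sur:
  assumes S: "S \<subseteq> {0..<n}"
  shows "surj_of n S \<in> Sur n (card S)"
proof -
  have f: "finite S" using S finite_subset by blast
  have "{s\<in>S. s < n} = S" using S by auto
  then have "rank S n = card S" unfolding rank_def by simp
  then have top: "card S \<in> rank S ` {0..n}" by force
  have "rank S ` S \<subseteq> rank S ` {0..n}" using S by auto
  moreover have "{0..card S} = insert (card S) {0..<card S}" by auto
  ultimately have "{0..card S} \<subseteq> rank S ` {0..n}" using top rank_image[OF f] by auto
  moreover have "rank S ` {0..n} \<subseteq> {0..card S}" using rank_le_card[OF f] by auto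
  ultimately have "rank S ` {0..n} = {0..card S}" by blast
  then show ?thesis
    unfolding Sur_def surj_of_def using rank_le_card[OF f]
    by (auto simp: mono_on_def rank_mono[OF f] intro!: image_cong)
qed

text \<open>The fibre of surj_of n S over the rank of s \<in> S has maximum s, so mu^triangle = S.\<close>
lemma tri_surj_of:
  assumes S: "S \<subseteq> {0..<n}"
  shows "tri n (card S) (surj_of n S) = S"
proof -
  have f: "finite S" using S finite_subset by blast
  have max_fibre: "Max {i \<in> {0..n}. surj_of n S i = rank S s} = s" if s: "s \<in> S" for s
  proof (rule Max_eqI)
    show "s \<in> {i \<in> {0..n}. surj_of n S i = rank S s}" using s S by (auto simp: surj_of_def)
    fix i assume "i \<in> {i \<in> {0..n}. surj_of n S i = rank S s}"
    then have "rank S i = rank S s" by (auto simp: surj_of_def)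
    then show "i \<le> s"
      using rank_mono[OF f, of "Suc s" i] rank_Suc_member[OF f s] by (cases "i \<le> s") auto
  qed simp
  have "tri n (card S) (surj_of n S) = (\<lambda>j. Max {i \<in> {0..n}. surj_of n S i = j}) ` rank S ` S"
    unfolding tri_def rank_image[OF f] ..
  also have "\<dots> = S" using max_fibre by (simp add: image_image)
  finally show ?thesis .
qed

text \<open>Distinct k-subsets give distinct surjections, since the subset is recovered as mu^triangle.\<close>
lemma surj_of_inj_on:
  assumes "\<And>A. A \<in> F \<Longrightarrow> A \<subseteq> {0..<n} \<and> card A = k"
  shows "inj_on (surj_of n) F"
proof (rule inj_onI)
  fix A B assume A: "A \<in> F" and B: "B \<in> F" and eq: "surj_of n A = surj_of n B"
  have "A = tri n k (surj_of n A)" using assms[OF A] tri_surj_of by metis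
  also have "\<dots> = B" using assms[OF B] tri_surj_of eq by metis
  finally show "A = B" .
qed

lemma card_tri_le: "card (tri n k \<mu>) \<le> k"
  unfolding tri_def using card_image_le[of "{0..<k}"] by simp

lemma finite_SurAll: "finite (SurAll n)"
proof -
  have "Sur n k \<subseteq> {0..n} \<rightarrow>\<^sub>E {0..k}" for k unfolding Sur_def by auto
  then have "finite (Sur n k)" for k by (rule finite_subset) (simp add: finite_PiE)
  then show ?thesis unfolding SurAll_def by auto
qed

lemma sum_tags_eq_weight:
  assumes sub: "\<alpha> \<subseteq> SurAll n"
  shows "(\<Sum>x\<in>\<alpha>. fst x) = (\<Sum>k=0..n. k * card (layer \<alpha> k))"
proof -
  have "layer \<alpha> k \<subseteq> snd ` \<alpha>" for k by (force simp: layer_def)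
  then have fin: "finite (layer \<alpha> k)" for k
    using finite_subset[OF sub finite_SurAll] finite_subset by blast
  have "\<alpha> = (SIGMA k:{0..n}. layer \<alpha> k)"
    using sub unfolding SurAll_def layer_def by auto
  then have "(\<Sum>x\<in>\<alpha>. fst x) = (\<Sum>k=0..n. \<Sum>\<mu>\<in>layer \<alpha> k. k)"
    using sum.Sigma[of "{0..n}" "layer \<alpha>" "\<lambda>k \<mu>. k"] fin by (simp add: case_prod_beta')
  then show ?thesis by (simp add: mult.commute)
qed

text \<open>Part (a): the union of the sets mu^triangle has n elements but at most
  \<Sum>_{(k,mu)\<in>alpha} k of them.\<close>
theorem honourable_weight_ge:
  assumes sub: "\<alpha> \<subseteq> SurAll n" and hon: "honourable n \<alpha>"
  shows "n \<le> (\<Sum>k=0..n. k * card (layer \<alpha> k))"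
proof -
  have fin: "finite \<alpha>" using sub finite_SurAll finite_subset by blast
  have "n = card (\<Union>(k, \<mu>)\<in>\<alpha>. tri n k \<mu>)" using hon unfolding honourable_def by simp
  also have "\<dots> \<le> (\<Sum>x\<in>\<alpha>. card (case x of (k, \<mu>) \<Rightarrow> tri n k \<mu>))"
    by (rule card_UN_le[OF fin])
  also have "\<dots> \<le> (\<Sum>x\<in>\<alpha>. fst x)"
    by (rule sum_mono) (auto simp: card_tri_le split: prod.split)
  also have "\<dots> = (\<Sum>k=0..n. k * card (layer \<alpha> k))" by (rule sum_tags_eq_weight[OF sub])
  finally show ?thesis .
qed

lemma extend_to_k_subset:
  assumes X: "finite X" and V: "V \<subseteq> X" "card V \<le> k" and k: "k \<le> card X"
  obtains A where "V \<subseteq> A" "A \<subseteq> X" "card A = k"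
proof -
  have "k - card V \<le> card (X - V)" using V k X by (simp add: card_Diff_subset finite_subset)
  then obtain W where W: "W \<subseteq> X - V" "card W = k - card V"
    using obtain_subset_with_card_n by metis
  have "finite V" "finite W" using V W X finite_subset by (blast, blast)
  then have "card (V \<union> W) = k" using W V by (subst card_Un_disjoint) auto
  then show ?thesis using that[of "V \<union> W"] V W by auto
qed

lemma cover_by_k_subsets:
  assumes "finite X" "m \<le> card X choose k" "U \<subseteq> X" "card U \<le> k * m"
  shows "\<exists>F. F \<subseteq> {A. A \<subseteq> X \<and> card A = k} \<and> card F = m \<and> U \<subseteq> \<Union>F"
  using assms(2-)
proof (induction m arbitrary: U)
  case 0
  moreover have "finite U" using 0 \<open>finite X\<close> finite_subset by blast
  ultimately have "U = {}" by simp
  then show ?case by (intro exI[of _ "{}"]) simp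
next
  case (Suc m)
  let ?K = "{A. A \<subseteq> X \<and> card A = k}"
  have card_K: "card ?K = card X choose k" using n_subsets[OF \<open>finite X\<close>] by simp
  have fin_K: "finite ?K" using \<open>finite X\<close> by (simp add: finite_Collect_subsets)
  have "k \<le> card X" using Suc.prems(1) by (metis binomial_eq_0 not_le not_less_eq_eq le_0_eq nat.distinct(1))
  text \<open>Cover a chunk V of at most k points of U by one k-set A, the rest by induction.\<close>
  obtain V where V: "V \<subseteq> U" "card V = min k (card U)"
    using obtain_subset_with_card_n[of "min k (card U)" U] by auto
  obtain A where A: "V \<subseteq> A" "A \<in> ?K"
    using extend_to_k_subset[OF \<open>finite X\<close>, of V k] V Suc.prems(2) \<open>k \<le> card X\<close> by auto
  have "finite U" using Suc.prems(2) \<open>finite X\<close> finite_subset by blast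
  moreover have "finite V" using V(1) \<open>finite U\<close> finite_subset by blast
  ultimately have "card (U - V) \<le> k * m"
    using Suc.prems(3) V by (cases "k \<le> card U") (auto simp: card_Diff_subset)
  then obtain F where F: "F \<subseteq> ?K" "card F = m" "U - V \<subseteq> \<Union>F"
    using Suc.IH[of "U - V"] Suc.prems(1,2) by fastforce
  have "finite F" using F(1) fin_K finite_subset by blast
  text \<open>Add A, or if A is already used, any unused k-subset (there is one since m < |K|).\<close>
  obtain B where B: "B \<in> ?K" "B \<notin> F" "U \<subseteq> \<Union>(insert B F)"
  proof (cases "A \<in> F")
    case True
    have "card F < card ?K" using F(2) Suc.prems(1) card_K by simp
    then have "\<not> ?K \<subseteq> F" using card_mono[OF \<open>finite F\<close>, of ?K] by linarith
    then obtain C where "C \<in> ?K" "C \<notin> F" by blast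
    then show ?thesis by (rule that) (use F(3) True A(1) in blast)
  next
    case False
    with A(2) show ?thesis by (rule that) (use F(3) A(1) in blast)
  qed
  moreover have "card (insert B F) = Suc m" using B(2) F(2) \<open>finite F\<close> by simp
  ultimately show ?case using F(1) by (intro exI[of _ "insert B F"]) blast
qed

lemma prefix_sum_block:
  fixes c :: "nat \<Rightarrow> nat"
  assumes "i < (\<Sum>j\<le>n. c j)"
  shows "\<exists>k\<le>n. (\<Sum>j<k. c j) \<le> i \<and> i < (\<Sum>j<Suc k. c j)"
  using assms
proof (induction n)
  case 0 then show ?case by simp
next
  case (Suc n)
  show ?case
  proof (cases "i < (\<Sum>j\<le>n. c j)")
    case True then show ?thesis using Suc.IH le_Suc_eq by blast
  next
    case False then show ?thesis using Suc.prems lessThan_Suc_atMost by (intro exI[of _ "Suc n"]) auto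
  qed
qed

lemma honourable_of_subset_families:
  assumes F: "\<And>k. k \<in> {0..n} \<Longrightarrow> F k \<subseteq> {A. A \<subseteq> {0..<n} \<and> card A = k}"
    and covers: "{0..<n} \<subseteq> (\<Union>k\<in>{0..n}. \<Union>(F k))"
  defines "\<alpha> \<equiv> SIGMA k:{0..n}. surj_of n ` F k"
  shows "\<alpha> \<subseteq> SurAll n" "honourable n \<alpha>" "\<And>k. k \<in> {0..n} \<Longrightarrow> card (layer \<alpha> k) = card (F k)"
proof -
  have tri_eq: "tri n k (surj_of n A) = A" if "k \<in> {0..n}" "A \<in> F k" for k A
    using F[OF that(1)] that(2) tri_surj_of[of A n] by auto
  have "surj_of n A \<in> Sur n k" if "k \<in> {0..n}" "A \<in> F k" for k A
    using F[OF that(1)] that(2) surj_of_in_Sur[of A n] by auto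
  then show "\<alpha> \<subseteq> SurAll n" unfolding \<alpha>_def SurAll_def by blast
  have "(\<Union>(k, \<mu>)\<in>\<alpha>. tri n k \<mu>) = (\<Union>k\<in>{0..n}. \<Union>(F k))"
    unfolding \<alpha>_def using tri_eq by fastforce
  also have "\<dots> = {0..<n}" using covers F by blast
  finally show "honourable n \<alpha>" unfolding honourable_def .
  fix k assume k: "k \<in> {0..n}"
  have "layer \<alpha> k = surj_of n ` F k" using k unfolding \<alpha>_def layer_def by auto
  moreover have "inj_on (surj_of n) (F k)" by (rule surj_of_inj_on) (use F[OF k] in blast)
  ultimately show "card (layer \<alpha> k) = card (F k)" by (simp add: card_image)
qed

theorem honourable_exists:
  assumes bound: "\<forall>k\<in>{0..n}. a k \<le> n choose k" and weight: "n \<le> (\<Sum>k=0..n. k * a k)"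
  shows "\<exists>\<alpha>. \<alpha> \<subseteq> SurAll n \<and> honourable n \<alpha> \<and> (\<forall>k\<in>{0..n}. card (layer \<alpha> k) = a k)"
proof -
  text \<open>U k is the k-th block [S k, S (k+1)) of length k a_k, cut down to {0..<n}.\<close>
  define S where "S k = (\<Sum>j<k. j * a j)" for k
  define U where "U k = {i. i < n \<and> S k \<le> i \<and> i < S (Suc k)}" for k
  have U_sub: "U k \<subseteq> {0..<n}" for k unfolding U_def by auto
  have "U k \<subseteq> {S k..<S (Suc k)}" for k unfolding U_def by auto
  then have card_U: "card (U k) \<le> k * a k" for k
    using card_mono[of "{S k..<S (Suc k)}" "U k"] by (simp add: S_def)
  have blocks_cover: "{0..<n} \<subseteq> (\<Union>k\<in>{0..n}. U k)"
  proof
    fix i assume "i \<in> {0..<n}"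
    then have "i < (\<Sum>j\<le>n. j * a j)" using weight by (simp add: atLeast0AtMost)
    then show "i \<in> (\<Union>k\<in>{0..n}. U k)"
      using prefix_sum_block[where c="\<lambda>j. j * a j" and i=i and n=n] \<open>i \<in> {0..<n}\<close>
      by (auto simp: U_def S_def)
  qed
  have "\<exists>F. F \<subseteq> {A. A \<subseteq> {0..<n} \<and> card A = k} \<and> card F = a k \<and> U k \<subseteq> \<Union>F"
    if "k \<in> {0..n}" for k
    using cover_by_k_subsets[of "{0..<n}" "a k" k "U k"] bound that card_U[of k] U_sub[of k]
    by simp
  then have "\<forall>k\<in>{0..n}. \<exists>F. F \<subseteq> {A. A \<subseteq> {0..<n} \<and> card A = k} \<and> card F = a k \<and> U k \<subseteq> \<Union>F"
    by blast
  then obtain F where F: "\<forall>k\<in>{0..n}.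
      F k \<subseteq> {A. A \<subseteq> {0..<n} \<and> card A = k} \<and> card (F k) = a k \<and> U k \<subseteq> \<Union>(F k)"
    by (rule bchoice[THEN exE])
  have "{0..<n} \<subseteq> (\<Union>k\<in>{0..n}. U k)" by (fact blocks_cover)
  also have "\<dots> \<subseteq> (\<Union>k\<in>{0..n}. \<Union>(F k))" using F by (intro UN_mono) auto
  finally have covers: "{0..<n} \<subseteq> (\<Union>k\<in>{0..n}. \<Union>(F k))" .
  let ?\<alpha> = "SIGMA k:{0..n}. surj_of n ` F k"
  have "?\<alpha> \<subseteq> SurAll n" "honourable n ?\<alpha>" "\<forall>k\<in>{0..n}. card (layer ?\<alpha> k) = card (F k)"
    using honourable_of_subset_families[where F=F and n=n] F covers by auto
  then show ?thesis using F by (intro exI[of _ ?\<alpha>]) auto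
qed

theorem mainTheorem11:
  fixes n :: nat
  assumes "n \<ge> 1"
  shows "(\<forall>\<alpha>. \<alpha> \<subseteq> SurAll n \<and> honourable n \<alpha> \<longrightarrow>
            (\<Sum>k=0..n. k * card (layer \<alpha> k)) \<ge> n)
       \<and> (\<forall>a :: nat \<Rightarrow> nat. (\<forall>k\<in>{0..n}. a k \<le> n choose k) \<and> (\<Sum>k=0..n. k * a k) \<ge> n \<longrightarrow>
            (\<exists>\<alpha>. \<alpha> \<subseteq> SurAll n \<and> honourable n \<alpha> \<and> (\<forall>k\<in>{0..n}. card (layer \<alpha> k) = a k)))"
  using honourable_weight_ge honourable_exists by blast

end
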